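(* Let $n\in\mathbb{N}$ and $b_{n,i}(x)=\binom ni x^i(1-x)^{n-i}$ for $i=0,1,\dots,n$. Then \[ \sum_{i,j=0}^n\bigl(b_{n,i}(x)b_{n,j}(x)+b_{n,i}(y)b_{n,j}(y)-2b_{n,i}(x)b_{n,j}(y)\bigr)f\Bigl(\frac{i+j}{2n}\Bigr)\ge 0 \] for every convex continuous function $f:[0,1]\to\mathbb{R}$ and all $x,y\in[0,1]$. *)

theory Defs
  imports "HOL-Analysis.Analysis"
begin

definition bern :: "nat \<Rightarrow> nat \<Rightarrow> real \<Rightarrow> real" where
  "bern n i x = real (n choose i) * x ^ i * (1 - x) ^ (n - i)"

end

theory Submission
  imports Defs
begin

text \<open>
  With \<open>K i j = f ((i + j) / 2n)\<close> and \<open>X, X' \<sim> Bin(n, x)\<close>, \<open>Y, Y' \<sim> Bin(n, y)\<close> independent,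
  the sum is \<open>E K(X, X') + E K(Y, Y') - 2 E K(X, Y)\<close>. For \<open>x \<le> y\<close> couple \<open>X \<le> Y\<close> by counting
  how many of \<open>n\<close> uniform samples fall below \<open>x\<close> and below \<open>y\<close>. For two independent copies
  \<open>(X, Y)\<close>, \<open>(X', Y')\<close> of this coupling the sum becomes
  \<open>E [K(X, X') + K(Y, Y') - K(X, Y') - K(X', Y)]\<close>, and each term is nonnegative by convexity of \<open>f\<close>:
  \<open>X + Y'\<close> and \<open>X' + Y\<close> lie between \<open>X + X'\<close> and \<open>Y + Y'\<close> and have the same sum.
\<close>

text \<open>For probability weights \<open>u\<close>, \<open>v\<close>: the squared maximum mean discrepancy of their laws
  with respect to the kernel \<open>K\<close>.\<close>
definition kernel_discrepancy ::
    "'a set \<Rightarrow> ('a \<Rightarrow> 'a \<Rightarrow> real) \<Rightarrow> ('a \<Rightarrow> real) \<Rightarrow> ('a \<Rightarrow> real) \<Rightarrow> real" where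
  "kernel_discrepancy A K u v = (\<Sum>i\<in>A. \<Sum>j\<in>A. (u i * u j + v i * v j - 2 * u i * v j) * K i j)"

lemma kernel_discrepancy_expand:
  "kernel_discrepancy A K u v =
     (\<Sum>i\<in>A. \<Sum>j\<in>A. u i * u j * K i j) + (\<Sum>i\<in>A. \<Sum>j\<in>A. v i * v j * K i j)
     - 2 * (\<Sum>i\<in>A. \<Sum>j\<in>A. u i * v j * K i j)"
  by (simp add: kernel_discrepancy_def algebra_simps sum.distrib sum_subtractf sum_distrib_left)

lemma kernel_discrepancy_commute:
  assumes "\<And>i j. K i j = K j i"
  shows "kernel_discrepancy A K u v = kernel_discrepancy A K v u"
proof -
  have "(\<Sum>i\<in>A. \<Sum>j\<in>A. u i * v j * K i j) = (\<Sum>i\<in>A. \<Sum>j\<in>A. v i * u j * K i j)"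
    by (subst sum.swap) (simp add: assms mult.commute)
  then show ?thesis
    by (simp add: kernel_discrepancy_expand)
qed

lemma coupling_moment_fst_fst:
  fixes p K :: "'a \<Rightarrow> 'a \<Rightarrow> 'b::semiring_0"
  assumes u: "\<And>i. i \<in> A \<Longrightarrow> (\<Sum>k\<in>A. p i k) = u i"
  shows "(\<Sum>i\<in>A. \<Sum>k\<in>A. \<Sum>j\<in>A. \<Sum>l\<in>A. p i k * p j l * K i j)
    = (\<Sum>i\<in>A. \<Sum>j\<in>A. u i * u j * K i j)"
proof -
  have "(\<Sum>i\<in>A. \<Sum>j\<in>A. u i * u j * K i j)
      = (\<Sum>i\<in>A. \<Sum>j\<in>A. \<Sum>k\<in>A. \<Sum>l\<in>A. p i k * p j l * K i j)"
    by (intro sum.cong refl) (simp flip: u sum_product sum_distrib_right)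
  also have "\<dots> = (\<Sum>i\<in>A. \<Sum>k\<in>A. \<Sum>j\<in>A. \<Sum>l\<in>A. p i k * p j l * K i j)"
    by (intro sum.cong refl sum.swap)
  finally show ?thesis ..
qed

lemma coupling_moment_snd_snd:
  fixes p K :: "'a \<Rightarrow> 'a \<Rightarrow> 'b::semiring_0"
  assumes v: "\<And>k. k \<in> A \<Longrightarrow> (\<Sum>i\<in>A. p i k) = v k"
  shows "(\<Sum>i\<in>A. \<Sum>k\<in>A. \<Sum>j\<in>A. \<Sum>l\<in>A. p i k * p j l * K k l)
    = (\<Sum>k\<in>A. \<Sum>l\<in>A. v k * v l * K k l)"
proof -
  have "(\<Sum>k\<in>A. \<Sum>l\<in>A. v k * v l * K k l)
      = (\<Sum>k\<in>A. \<Sum>l\<in>A. \<Sum>i\<in>A. \<Sum>j\<in>A. p i k * p j l * K k l)"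
    by (intro sum.cong refl) (simp flip: v sum_product sum_distrib_right)
  also have "\<dots> = (\<Sum>k\<in>A. \<Sum>i\<in>A. \<Sum>l\<in>A. \<Sum>j\<in>A. p i k * p j l * K k l)"
    by (intro sum.cong refl sum.swap)
  also have "\<dots> = (\<Sum>i\<in>A. \<Sum>k\<in>A. \<Sum>j\<in>A. \<Sum>l\<in>A. p i k * p j l * K k l)"
    by (subst sum.swap) (intro sum.cong refl sum.swap)
  finally show ?thesis ..
qed

lemma coupling_moment_fst_snd:
  fixes p K :: "'a \<Rightarrow> 'a \<Rightarrow> 'b::semiring_0"
  assumes u: "\<And>i. i \<in> A \<Longrightarrow> (\<Sum>k\<in>A. p i k) = u i"
    and v: "\<And>k. k \<in> A \<Longrightarrow> (\<Sum>i\<in>A. p i k) = v k"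
  shows "(\<Sum>i\<in>A. \<Sum>k\<in>A. \<Sum>j\<in>A. \<Sum>l\<in>A. p i k * p j l * K i l)
    = (\<Sum>i\<in>A. \<Sum>l\<in>A. u i * v l * K i l)"
proof -
  have "(\<Sum>i\<in>A. \<Sum>l\<in>A. u i * v l * K i l)
      = (\<Sum>i\<in>A. \<Sum>l\<in>A. \<Sum>k\<in>A. \<Sum>j\<in>A. p i k * p j l * K i l)"
    by (intro sum.cong refl) (simp flip: u v sum_product sum_distrib_right)
  also have "\<dots> = (\<Sum>i\<in>A. \<Sum>k\<in>A. \<Sum>l\<in>A. \<Sum>j\<in>A. p i k * p j l * K i l)"
    by (intro sum.cong refl sum.swap)
  also have "\<dots> = (\<Sum>i\<in>A. \<Sum>k\<in>A. \<Sum>j\<in>A. \<Sum>l\<in>A. p i k * p j l * K i l)"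
    by (intro sum.cong refl sum.swap)
  finally show ?thesis ..
qed

lemma kernel_discrepancy_coupling:
  assumes u: "\<And>i. i \<in> A \<Longrightarrow> (\<Sum>k\<in>A. p i k) = u i"
    and v: "\<And>k. k \<in> A \<Longrightarrow> (\<Sum>i\<in>A. p i k) = v k"
  shows "kernel_discrepancy A K u v =
    (\<Sum>i\<in>A. \<Sum>k\<in>A. \<Sum>j\<in>A. \<Sum>l\<in>A. p i k * p j l * (K i j + K k l - K i l - K j k))"
proof -
  have relabel: "(\<Sum>i\<in>A. \<Sum>k\<in>A. \<Sum>j\<in>A. \<Sum>l\<in>A. p i k * p j l * K j k)
      = (\<Sum>i\<in>A. \<Sum>k\<in>A. \<Sum>j\<in>A. \<Sum>l\<in>A. p i k * p j l * K i l)"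
  proof -
    \<comment> \<open>rename \<open>(i, k) \<leftrightarrow> (j, l)\<close>, then move the pair \<open>(i, k)\<close> outside\<close>
    have "(\<Sum>i\<in>A. \<Sum>k\<in>A. \<Sum>j\<in>A. \<Sum>l\<in>A. p i k * p j l * K j k)
        = (\<Sum>j\<in>A. \<Sum>l\<in>A. \<Sum>i\<in>A. \<Sum>k\<in>A. p i k * p j l * K i l)"
      by (simp add: mult.commute)
    also have "\<dots> = (\<Sum>j\<in>A. \<Sum>i\<in>A. \<Sum>l\<in>A. \<Sum>k\<in>A. p i k * p j l * K i l)"
      by (intro sum.cong refl sum.swap)
    also have "\<dots> = (\<Sum>i\<in>A. \<Sum>j\<in>A. \<Sum>k\<in>A. \<Sum>l\<in>A. p i k * p j l * K i l)"
      by (subst sum.swap) (intro sum.cong refl sum.swap)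
    also have "\<dots> = (\<Sum>i\<in>A. \<Sum>k\<in>A. \<Sum>j\<in>A. \<Sum>l\<in>A. p i k * p j l * K i l)"
      by (intro sum.cong refl sum.swap)
    finally show ?thesis .
  qed
  have "(\<Sum>i\<in>A. \<Sum>k\<in>A. \<Sum>j\<in>A. \<Sum>l\<in>A. p i k * p j l * (K i j + K k l - K i l - K j k))
      = (\<Sum>i\<in>A. \<Sum>k\<in>A. \<Sum>j\<in>A. \<Sum>l\<in>A. p i k * p j l * K i j)
      + (\<Sum>i\<in>A. \<Sum>k\<in>A. \<Sum>j\<in>A. \<Sum>l\<in>A. p i k * p j l * K k l)
      - (\<Sum>i\<in>A. \<Sum>k\<in>A. \<Sum>j\<in>A. \<Sum>l\<in>A. p i k * p j l * K i l)
      - (\<Sum>i\<in>A. \<Sum>k\<in>A. \<Sum>j\<in>A. \<Sum>l\<in>A. p i k * p j l * K j k)"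
    by (simp only: distrib_left right_diff_distrib sum.distrib sum_subtractf)
  then show ?thesis
    unfolding kernel_discrepancy_expand relabel
    by (simp add: coupling_moment_fst_fst coupling_moment_snd_snd coupling_moment_fst_snd u v)
qed

lemma kernel_discrepancy_nonneg:
  fixes p K :: "'a \<Rightarrow> 'a \<Rightarrow> real"
  assumes u: "\<And>i. i \<in> A \<Longrightarrow> (\<Sum>k\<in>A. p i k) = u i"
    and v: "\<And>k. k \<in> A \<Longrightarrow> (\<Sum>i\<in>A. p i k) = v k"
    and p_nonneg: "\<And>i k. i \<in> A \<Longrightarrow> k \<in> A \<Longrightarrow> 0 \<le> p i k"
    and K_exchange: "\<And>i k j l. i \<in> A \<Longrightarrow> k \<in> A \<Longrightarrow> j \<in> A \<Longrightarrow> l \<in> A \<Longrightarrow>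
        p i k \<noteq> 0 \<Longrightarrow> p j l \<noteq> 0 \<Longrightarrow> K i l + K j k \<le> K i j + K k l"
  shows "0 \<le> kernel_discrepancy A K u v"
proof -
  have "0 \<le> (\<Sum>i\<in>A. \<Sum>k\<in>A. \<Sum>j\<in>A. \<Sum>l\<in>A. p i k * p j l * (K i j + K k l - K i l - K j k))"
  proof (intro sum_nonneg)
    fix i k j l assume A: "i \<in> A" "k \<in> A" "j \<in> A" "l \<in> A"
    show "0 \<le> p i k * p j l * (K i j + K k l - K i l - K j k)"
    proof (cases "p i k = 0 \<or> p j l = 0")
      case False
      then have "K i l + K j k \<le> K i j + K k l" using K_exchange A by blast
      then show ?thesis using p_nonneg A by simp
    qed auto
  qed
  also have "\<dots> = kernel_discrepancy A K u v"
    by (rule kernel_discrepancy_coupling[symmetric]) (simp_all add: u v)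
  finally show ?thesis .
qed

lemma convex_on_add_le_add_endpoints:
  fixes f :: "real \<Rightarrow> real"
  assumes f: "convex_on {a..d} f"
    and "a \<le> b" "b \<le> d" "a \<le> c" "c \<le> d" "b + c = a + d"
  shows "f b + f c \<le> f a + f d"
proof (cases "a = d")
  case False
  let ?s = "(f d - f a) / (d - a)"
  have "f b \<le> ?s * (b - a) + f a" "f c \<le> ?s * (c - a) + f a"
    using convex_onD_Icc'[OF f, of b] convex_onD_Icc'[OF f, of c] assms by auto
  moreover have "?s * (b - a) + ?s * (c - a) = f d - f a"
  proof -
    have "?s * (b - a) + ?s * (c - a) = ?s * ((b - a) + (c - a))"
      by (rule distrib_left[symmetric])
    also have "(b - a) + (c - a) = d - a"
      using assms by simp
    also have "?s * (d - a) = f d - f a"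
      using False by simp
    finally show ?thesis .
  qed
  ultimately show ?thesis by linarith
qed (use assms in auto)

lemma convex_on_midpoint_kernel:
  fixes f :: "real \<Rightarrow> real"
  assumes f: "convex_on {0..1} f" and "i \<le> k" "k \<le> n" "j \<le> l" "l \<le> n"
  shows "f (real (i + l) / (2 * real n)) + f (real (j + k) / (2 * real n))
     \<le> f (real (i + j) / (2 * real n)) + f (real (k + l) / (2 * real n))"
proof (cases "n = 0")
  case False
  let ?t = "\<lambda>m. real m / (2 * real n)"
  have mono: "?t m \<le> ?t m'" if "m \<le> m'" for m m'
    using that by (simp add: divide_right_mono)
  have "convex_on {?t (i + j)..?t (k + l)} f"
    using False assms by (intro convex_on_subset[OF f]) (auto simp: field_simps)
  then show ?thesis
    using assms by (intro convex_on_add_le_add_endpoints mono) (auto simp: add_divide_distrib)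
qed simp

text \<open>The joint law of the numbers of \<open>n\<close> independent uniform samples lying below \<open>x\<close> and
  below \<open>y\<close>, for \<open>x \<le> y\<close>.\<close>
definition bern_coupling :: "nat \<Rightarrow> real \<Rightarrow> real \<Rightarrow> nat \<Rightarrow> nat \<Rightarrow> real" where
  "bern_coupling n x y i k =
    (if i \<le> k then real (n choose k) * real (k choose i) * x ^ i * (y - x) ^ (k - i) * (1 - y) ^ (n - k)
     else 0)"

lemma bern_coupling_nonneg:
  assumes "0 \<le> x" "x \<le> y" "y \<le> 1"
  shows "0 \<le> bern_coupling n x y i k"
  using assms by (simp add: bern_coupling_def)

lemma bern_coupling_nonzero_imp_le:
  "bern_coupling n x y i k \<noteq> 0 \<Longrightarrow> i \<le> k"
  by (simp add: bern_coupling_def split: if_splits)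

lemma sum_bern_coupling_snd:
  assumes "k \<le> n"
  shows "(\<Sum>i\<le>n. bern_coupling n x y i k) = bern n k y"
proof -
  have "(\<Sum>i\<le>n. bern_coupling n x y i k) = (\<Sum>i\<le>k. bern_coupling n x y i k)"
    using assms by (intro sum.mono_neutral_right) (auto simp: bern_coupling_def)
  also have "\<dots> = real (n choose k) * (1 - y) ^ (n - k) * (\<Sum>i\<le>k. real (k choose i) * x ^ i * (y - x) ^ (k - i))"
    by (simp add: bern_coupling_def sum_distrib_left mult_ac)
  also have "\<dots> = bern n k y"
    by (simp add: binomial_ring[of x "y - x" k, symmetric] bern_def)
  finally show ?thesis .
qed

lemma sum_bern_coupling_fst:
  assumes "i \<le> n"
  shows "(\<Sum>k\<le>n. bern_coupling n x y i k) = bern n i x"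
proof -
  have "(\<Sum>k\<le>n. bern_coupling n x y i k) = (\<Sum>k=i..n. bern_coupling n x y i k)"
    using assms by (intro sum.mono_neutral_right) (auto simp: bern_coupling_def)
  also have "\<dots> = (\<Sum>m=0..n-i. bern_coupling n x y i (i + m))"
    using sum.atLeastAtMost_shift_0[OF assms] by (simp add: comp_def)
  also have "\<dots> = real (n choose i) * x ^ i *
      (\<Sum>m=0..n-i. real ((n - i) choose m) * (y - x) ^ m * (1 - y) ^ (n - i - m))"
  proof -
    have "real (n choose (i + m)) * real ((i + m) choose i) = real (n choose i) * real ((n - i) choose m)"
      if "m \<le> n - i" for m
      using choose_mult[of i "i + m" n] that assms by (simp flip: of_nat_mult)
    then show ?thesis
      by (simp add: bern_coupling_def sum_distrib_left mult_ac)
  qed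
  also have "\<dots> = real (n choose i) * x ^ i * ((y - x) + (1 - y)) ^ (n - i)"
    by (simp only: binomial_ring atLeast0AtMost)
  also have "\<dots> = bern n i x"
    by (simp add: bern_def)
  finally show ?thesis .
qed

theorem theorem3:
  fixes n :: nat and f :: "real \<Rightarrow> real" and x y :: real
  assumes "convex_on {0..1} f" and "continuous_on {0..1} f"
    and "x \<in> {0..1}" and "y \<in> {0..1}"
  shows "(\<Sum>i\<le>n. \<Sum>j\<le>n.
           (bern n i x * bern n j x + bern n i y * bern n j y - 2 * bern n i x * bern n j y)
             * f (real (i + j) / (2 * real n))) \<ge> 0"
proof -
  define K where "K i j = f (real (i + j) / (2 * real n))" for i j :: nat
  have K_le: "K i l + K j k \<le> K i j + K k l" if "i \<le> k" "k \<le> n" "j \<le> l" "l \<le> n" for i k j l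
    unfolding K_def using convex_on_midpoint_kernel[OF assms(1) that] .
  have nonneg_le: "0 \<le> kernel_discrepancy {..n} K (\<lambda>i. bern n i a) (\<lambda>i. bern n i b)"
    if "0 \<le> a" "a \<le> b" "b \<le> 1" for a b
    by (rule kernel_discrepancy_nonneg[where p = "bern_coupling n a b"])
      (auto simp: sum_bern_coupling_fst sum_bern_coupling_snd bern_coupling_nonneg that
        intro: K_le dest: bern_coupling_nonzero_imp_le)
  have K_sym: "K i j = K j i" for i j
    by (simp add: K_def add.commute)
  have "0 \<le> kernel_discrepancy {..n} K (\<lambda>i. bern n i x) (\<lambda>i. bern n i y)"
  proof (cases "x \<le> y")
    case True
    then show ?thesis using assms by (intro nonneg_le) auto
  next
    case False
    then show ?thesis using assms nonneg_le[of y x]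
      by (subst kernel_discrepancy_commute[OF K_sym]) auto
  qed
  then show ?thesis
    by (simp add: kernel_discrepancy_def K_def)
qed

end
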